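(* Let $r,t,\ell,m$ be integers with $1 \le r \le \ell \le m$ and $1 \le t < \ell$. Then $$\hat{\mathfrak w}_r(t;\ell,m) = A(r,t)-A(r,t-1)+ q^{m-1}\mu_{t-1}(\ell-1,m),$$ where for $0\le s<\ell$, $$A(r,s):=q^{s}\, \hat{\mathfrak w}_{r-1}(s;\ell-1,m-1)+q^{s-1}\bigl(\mu_s(\ell-1, m)-\mu_s(\ell-1,m-1)\bigr).$$
   Context: $q$ is a prime power. For nonnegative integers $a,b,t$, $\mu_t(a,b)$ denotes the number of $a\times b$ matrices over $\mathbb{F}_q$ of rank exactly $t$ (so $\mu_0(a,b)=1$ and $\mu_t(a,b)=0$ if $t>\min(a,b)$). For an $a\times b$ matrix $M=(m_{ij})$ and $0\le r\le a$, $\tau_r(M)=m_{11}+\cdots+m_{rr}$, with $\tau_0=0$. For $0\le r\le a$ and $t\ge 0$, $\mathfrak w_r(t;a,b)$ is the number of $a\times b$ matrices $M$ over $\mathbb{F}_q$ of rank exactly $t$ with $\tau_r(M)\ne 0$ (so $\mathfrak w_0(t;a,b)=0$ and $\mathfrak w_r(0;a,b)=0$), and $\hat{\mathfrak w}_r(t;a,b)=\mathfrak w_r(t;a,b)/(q-1)$. *)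

theory Defs
  imports "Jordan_Normal_Form.DL_Rank"
begin

text \<open>The finite field F_q is modelled by a finite field type 'a; q = card (UNIV :: 'a set).\<close>

definition mu :: "'a::{field,finite} itself \<Rightarrow> nat \<Rightarrow> nat \<Rightarrow> nat \<Rightarrow> nat" where
  "mu ty t a b = card {M :: 'a mat. M \<in> carrier_mat a b \<and> vec_space.rank a M = t}"

definition tau :: "nat \<Rightarrow> 'a::field mat \<Rightarrow> 'a" where
  "tau r M = (\<Sum>i<r. M $$ (i, i))"

definition frak_w :: "'a::{field,finite} itself \<Rightarrow> nat \<Rightarrow> nat \<Rightarrow> nat \<Rightarrow> nat \<Rightarrow> nat" where
  "frak_w ty r t a b = card {M :: 'a mat. M \<in> carrier_mat a b \<and> vec_space.rank a M = t \<and> tau r M \<noteq> 0}"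

definition hat_w :: "'a::{field,finite} itself \<Rightarrow> nat \<Rightarrow> nat \<Rightarrow> nat \<Rightarrow> nat \<Rightarrow> real" where
  "hat_w ty r t a b = real (frak_w ty r t a b) / (real (card (UNIV :: 'a set)) - 1)"

definition A_term :: "'a::{field,finite} itself \<Rightarrow> nat \<Rightarrow> nat \<Rightarrow> nat \<Rightarrow> nat \<Rightarrow> real" where
  "A_term ty l m r s =
     real (card (UNIV :: 'a set)) ^ s * hat_w ty (r - 1) s (l - 1) (m - 1)
     + real (card (UNIV :: 'a set)) powi (int s - 1) * (real (mu ty s (l - 1) m) - real (mu ty s (l - 1) (m - 1)))"

end

theory Submission
  imports Defs
begin

text \<open>Write an \<open>l \<times> m\<close> matrix as \<open>[c | A]\<close> with first column \<open>c\<close>. Then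
  \<open>\<tau>\<^sub>r [c | A] = c\<^sub>0 + \<sigma>\<^sub>r A\<close>, where \<open>\<sigma>\<^sub>r A\<close> is the sum of the first \<open>r - 1\<close> subdiagonal
  entries of \<open>A\<close>, and \<open>rank [c | A] = rank A + 1\<close> exactly when \<open>c\<close> lies outside the column
  space \<open>S\<close> of \<open>A\<close>, which has \<open>q ^ rank A\<close> elements. So for fixed \<open>A\<close> the columns \<open>c\<close> are
  counted through their first coordinate: if the first row of \<open>A\<close> is nonzero, \<open>c\<^sub>0\<close> is
  equidistributed on \<open>S\<close>; if it is zero, \<open>S\<close> lies in the hyperplane \<open>c\<^sub>0 = 0\<close>, and deleting the
  zero row turns \<open>A\<close> into an \<open>(l-1) \<times> (m-1)\<close> matrix \<open>N\<close> of the same rank with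
  \<open>\<sigma>\<^sub>r A = \<tau>\<^sub>r\<^sub>-\<^sub>1 N\<close>. Summing over \<open>A\<close> expresses \<open>\<frak>w\<^sub>r(t; l, m)\<close> through
  \<open>\<frak>w\<^sub>r\<^sub>-\<^sub>1(-; l-1, m-1)\<close> and the rank counts \<open>\<mu>\<close> of \<open>(l-1) \<times> (m-1)\<close> and \<open>l \<times> (m-1)\<close>
  matrices. Finally, \<open>\<mu>\<close> obeys the same recurrence when a row is added as when a column is
  added (counting columns gives one, the symmetric product formula for \<open>\<mu>\<close> the other), and
  comparing the two trades \<open>\<mu>\<^sub>s(l, m-1)\<close> for \<open>\<mu>\<^sub>s(l-1, m)\<close>, which yields the stated formula.\<close>

lemma card_Collect_not:
  assumes "finite X"
  shows "real (card {x \<in> X. \<not> P x}) = real (card X) - real (card {x \<in> X. P x})"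
proof -
  have "card X = card {x \<in> X. P x} + card {x \<in> X. \<not> P x}"
    using assms by (subst card_Un_disjoint[symmetric]) (auto intro: arg_cong[where f = card])
  then show ?thesis
    by simp
qed

lemma card_Diff_Collect:
  assumes X: "finite X" and S: "S \<subseteq> X"
  shows "real (card {x \<in> X - S. P x}) = real (card {x \<in> X. P x}) - real (card {x \<in> S. P x})"
proof -
  have fin: "finite {x \<in> X. P x}" and sub: "{x \<in> S. P x} \<subseteq> {x \<in> X. P x}"
    using X S by auto
  have "{x \<in> X - S. P x} = {x \<in> X. P x} - {x \<in> S. P x}"
    by auto
  then show ?thesis
    using card_Diff_subset[OF finite_subset[OF sub fin] sub] card_mono[OF fin sub] by simp
qed

lemma sum_if_const:
  assumes "finite X"
  shows "(\<Sum>x\<in>X. if P x then (c :: real) else 0) = real (card {x \<in> X. P x}) * c"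
  using sum.inter_filter[OF assms, of "\<lambda>_. c" P] by simp

lemma carrier_vec_0: "carrier_vec 0 = {vNil}"
proof (intro equalityI subsetI)
  fix x :: "'a vec"
  assume "x \<in> carrier_vec 0"
  then show "x \<in> {vNil}"
    by (cases x) (auto dest: carrier_vecD)
qed simp

lemma carrier_vec_Suc: "carrier_vec (Suc n) = (\<lambda>(a, v). vCons a v) ` (UNIV \<times> carrier_vec n)"
proof (intro equalityI subsetI)
  fix x :: "'a vec"
  assume x: "x \<in> carrier_vec (Suc n)"
  then show "x \<in> (\<lambda>(a, v). vCons a v) ` (UNIV \<times> carrier_vec n)"
  proof (cases x)
    case (vCons a w)
    then show ?thesis
      using x by (intro image_eqI[where x = "(a, w)"]) simp_all
  qed (auto dest: carrier_vecD)
qed auto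

lemma inj_vCons: "inj (\<lambda>(a, v). vCons a v)"
  by (simp add: inj_def)

lemma finite_carrier_vec [simp]: "finite (carrier_vec n :: 'a::finite vec set)"
  by (induct n) (simp_all add: carrier_vec_0 carrier_vec_Suc)

lemma card_carrier_vec: "card (carrier_vec n :: 'a::finite vec set) = card (UNIV :: 'a set) ^ n"
proof (induct n)
  case (Suc n)
  then show ?case
    unfolding carrier_vec_Suc
    by (simp add: card_image inj_on_subset[OF inj_vCons] card_cartesian_product)
qed (simp add: carrier_vec_0)

lemma card_carrier_vec_first_entry:
  "card {c \<in> carrier_vec (Suc n). c $ 0 = (a :: 'a::finite)} = card (UNIV :: 'a set) ^ n"
proof -
  have "{c \<in> carrier_vec (Suc n). c $ 0 = a} = vCons a ` carrier_vec n"
  proof (intro equalityI subsetI)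
    fix c
    assume "c \<in> {c \<in> carrier_vec (Suc n). c $ 0 = a}"
    then show "c \<in> vCons a ` carrier_vec n"
      by (cases c) (auto dest: carrier_vecD)
  qed auto
  moreover have "inj_on (vCons a) (carrier_vec n)"
    by (simp add: inj_on_def)
  ultimately show ?thesis
    by (simp add: card_image card_carrier_vec)
qed

lemma card_UNIV_field_ge_2: "card (UNIV :: 'a::{field,finite} set) \<ge> 2"
proof -
  have "card {0, 1 :: 'a} \<le> card (UNIV :: 'a set)"
    by (intro card_mono) auto
  then show ?thesis
    by simp
qed

section \<open>Spans over a finite field\<close>

context vec_space
begin

lemma span_empty_vec: "span {} = {0\<^sub>v n}"
  using span_empty by simp

lemma span_Cons:
  assumes ws: "set ws \<subseteq> carrier_vec n" and c: "c \<in> carrier_vec n"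
  shows "span (set (c # ws)) = (\<lambda>(a, y). a \<cdot>\<^sub>v c + y) ` (UNIV \<times> span (set ws))"
proof -
  have "span (set (c # ws)) = span_list (c # ws)"
    using span_list_as_span ws c by simp
  also have "\<dots> = {a \<cdot>\<^sub>v c + y | a y. y \<in> span_list ws}"
  proof (intro equalityI subsetI)
    fix x
    assume "x \<in> span_list (c # ws)"
    then obtain f where "x = f 0 \<cdot>\<^sub>v c + lincomb_list (f \<circ> Suc) ws"
      by (auto simp: span_list_def)
    then show "x \<in> {a \<cdot>\<^sub>v c + y | a y. y \<in> span_list ws}"
      by (auto simp: span_list_def)
  next
    fix x
    assume "x \<in> {a \<cdot>\<^sub>v c + y | a y. y \<in> span_list ws}"
    then obtain a g where x: "x = a \<cdot>\<^sub>v c + lincomb_list g ws"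
      by (auto simp: span_list_def)
    define f where "f i = (if i = 0 then a else g (i - 1))" for i
    have "f \<circ> Suc = g"
      by (auto simp: f_def)
    then have "lincomb_list f (c # ws) = x"
      using x by (simp add: f_def)
    then show "x \<in> span_list (c # ws)"
      by (auto simp: span_list_def)
  qed
  also have "\<dots> = (\<lambda>(a, y). a \<cdot>\<^sub>v c + y) ` (UNIV \<times> span (set ws))"
    using span_list_as_span[OF ws] by force
  finally show ?thesis .
qed

end

locale fvec_space = vec_space f_ty n for f_ty :: "'a::{field,finite} itself" and n
begin

lemma finite_span: "S \<subseteq> carrier_vec n \<Longrightarrow> finite (span S)"
  using finite_subset[OF span_is_subset2 finite_carrier_vec] by simp

lemma span_Cons_mem:
  assumes "set ws \<subseteq> carrier_vec n" and "c \<in> span (set ws)"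
  shows "span (set (c # ws)) = span (set ws)"
  using already_in_span[OF assms] by (simp add: insert_absorb)

lemma inj_on_smult_add_span:
  assumes ws: "set ws \<subseteq> carrier_vec n" and c: "c \<in> carrier_vec n"
    and c_notin: "c \<notin> span (set ws)"
  shows "inj_on (\<lambda>(a, y). a \<cdot>\<^sub>v c + y) (UNIV \<times> span (set ws))"
proof -
  let ?S = "span (set ws)"
  have S: "?S \<subseteq> carrier_vec n"
    using span_is_subset2[OF ws] by simp
  show ?thesis
  proof (rule inj_onI, clarify)
    fix a b y z
    assume y: "y \<in> ?S" and z: "z \<in> ?S" and eq: "a \<cdot>\<^sub>v c + y = b \<cdot>\<^sub>v c + z"
    have yz: "y \<in> carrier_vec n" "z \<in> carrier_vec n"
      using y z S by auto
    have diff: "(a - b) \<cdot>\<^sub>v c = z + (-1) \<cdot>\<^sub>v y"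
    proof (rule eq_vecI)
      fix i
      assume "i < dim_vec (z + (-1) \<cdot>\<^sub>v y)"
      then have "i < n"
        using yz by simp
      moreover have "(a \<cdot>\<^sub>v c + y) $ i = (b \<cdot>\<^sub>v c + z) $ i"
        using eq by simp
      ultimately show "((a - b) \<cdot>\<^sub>v c) $ i = (z + (-1) \<cdot>\<^sub>v y) $ i"
        using c yz by (simp add: algebra_simps)
    qed (use c yz in simp)
    have "a = b"
    proof (rule ccontr)
      assume "a \<noteq> b"
      have "z + (-1) \<cdot>\<^sub>v y \<in> ?S"
        using span_add1[OF ws z smult_in_span[OF ws y]] by simp
      then have "inverse (a - b) \<cdot>\<^sub>v ((a - b) \<cdot>\<^sub>v c) \<in> ?S"
        unfolding diff by (rule smult_in_span[OF ws])
      then show False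
        using \<open>a \<noteq> b\<close> c_notin by (simp add: smult_smult_assoc)
    qed
    then show "a = b \<and> y = z"
      using eq yz c by auto
  qed
qed

lemma card_span_Cons:
  assumes ws: "set ws \<subseteq> carrier_vec n" and c: "c \<in> carrier_vec n"
    and c_notin: "c \<notin> span (set ws)"
  shows "card (span (set (c # ws))) = card (UNIV :: 'a set) * card (span (set ws))"
proof -
  have "card (span (set (c # ws))) = card ((UNIV :: 'a set) \<times> span (set ws))"
    unfolding span_Cons[OF ws c] by (rule card_image[OF inj_on_smult_add_span[OF ws c c_notin]])
  then show ?thesis
    by (simp add: card_cartesian_product)
qed

definition span_dim :: "'a vec set \<Rightarrow> nat" where
  "span_dim S = vectorspace.dim class_ring (span_vs S)"

lemma span_dim_empty: "span_dim {} = 0"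
  unfolding span_dim_def by (rule dim_zero_vs)

lemma span_dim_Cons_mem:
  assumes "set ws \<subseteq> carrier_vec n" and "c \<in> span (set ws)"
  shows "span_dim (set (c # ws)) = span_dim (set ws)"
  unfolding span_dim_def using span_Cons_mem[OF assms] by simp

lemma lin_indpt_insert_iff:
  assumes "U \<subseteq> carrier_vec n" "lin_indpt U" "v \<in> carrier_vec n" "v \<notin> U"
  shows "lin_indpt (insert v U) \<longleftrightarrow> v \<notin> span U"
  using lin_dep_iff_in_span[OF assms(1,2) _ assms(4)] assms(3) by simp

lemma maximal_lin_indpt_insert:
  assumes S: "S \<subseteq> carrier_vec n" and c: "c \<in> carrier_vec n" and c_notin: "c \<notin> span S"
    and U: "maximal U (\<lambda>T. T \<subseteq> S \<and> lin_indpt T)"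
  shows "maximal (insert c U) (\<lambda>T. T \<subseteq> insert c S \<and> lin_indpt T)"
proof -
  have US: "U \<subseteq> S" and U_indpt: "lin_indpt U"
    using U by (auto simp: maximal_def)
  have U_carrier: "U \<subseteq> carrier_vec n"
    using US S by auto
  have c_notin_U: "c \<notin> span U"
    using c_notin span_is_monotone[OF US] by auto
  have S_in_span_U: "x \<in> span U" if x: "x \<in> S" for x
  proof (rule ccontr)
    assume "x \<notin> span U"
    moreover have "x \<notin> U"
      using \<open>x \<notin> span U\<close> in_own_span[OF U_carrier] by auto
    ultimately have "lin_indpt (insert x U)"
      using lin_indpt_insert_iff[OF U_carrier U_indpt] x S by auto
    then have "insert x U = U"
      using U x US unfolding maximal_def by blast
    then show False
      using \<open>x \<notin> U\<close> by auto
  qed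
  show ?thesis
    unfolding maximal_def
  proof (intro conjI allI impI)
    show "insert c U \<subseteq> insert c S"
      using US by auto
    show "lin_indpt (insert c U)"
      using lin_indpt_insert_iff[OF U_carrier U_indpt c] c_notin_U in_own_span[OF U_carrier] by auto
    fix B
    assume B: "insert c U \<subseteq> B \<and> B \<subseteq> insert c S \<and> lin_indpt B"
    show "B = insert c U"
    proof (rule ccontr)
      assume "B \<noteq> insert c U"
      then obtain x where "x \<in> B" "x \<notin> insert c U"
        using B by auto
      then have "x \<in> S" "lin_indpt (insert x U)"
        using B subset_li_is_li[of B "insert x U"] by auto
      then show False
        using lin_indpt_insert_iff[OF U_carrier U_indpt] S_in_span_U \<open>x \<notin> insert c U\<close> S by auto
    qed
  qed
qed

lemma span_dim_Cons:
  assumes ws: "set ws \<subseteq> carrier_vec n" and c: "c \<in> carrier_vec n"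
    and c_notin: "c \<notin> span (set ws)"
  shows "span_dim (set (c # ws)) = span_dim (set ws) + 1"
proof -
  obtain U where U: "maximal U (\<lambda>T. T \<subseteq> set ws \<and> lin_indpt T)"
    using maximal_exists[of "\<lambda>T. T \<subseteq> set ws \<and> lin_indpt T" "card (set ws)" "{}"]
    by (meson List.finite_set card_mono empty_iff empty_subsetI finite_lin_indpt2 rev_finite_subset)
  then have "maximal (insert c U) (\<lambda>T. T \<subseteq> set (c # ws) \<and> lin_indpt T)"
    using maximal_lin_indpt_insert[OF ws c c_notin] by simp
  then have "span_dim (set (c # ws)) = card (insert c U)"
    unfolding span_dim_def using dim_span ws c by simp
  moreover have "span_dim (set ws) = card U"
    unfolding span_dim_def using dim_span[OF _ _ U] ws by simp
  moreover have "U \<subseteq> set ws"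
    using U unfolding maximal_def by auto
  then have "finite U" "c \<notin> U"
    using finite_subset c_notin in_own_span[OF ws] by auto
  ultimately show ?thesis
    by simp
qed

lemma card_span: "set ws \<subseteq> carrier_vec n \<Longrightarrow> card (span (set ws)) = card (UNIV :: 'a set) ^ span_dim (set ws)"
proof (induct ws)
  case Nil
  then show ?case
    using span_empty_vec span_dim_empty by simp
next
  case (Cons c ws)
  then have ws: "set ws \<subseteq> carrier_vec n" and c: "c \<in> carrier_vec n"
    by auto
  show ?case
    using Cons(1)[OF ws] span_Cons_mem[OF ws] span_dim_Cons_mem[OF ws]
      card_span_Cons[OF ws c] span_dim_Cons[OF ws c]
    by (cases "c \<in> span (set ws)") auto
qed

lemma card_col_space:
  assumes "A \<in> carrier_mat n k"
  shows "card (span (set (cols A))) = card (UNIV :: 'a set) ^ rank A"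
  unfolding rank_def span_dim_def[symmetric] by (intro card_span) (use assms cols_dim[of A] in auto)

lemma span_first_entry_zero:
  assumes ws: "set ws \<subseteq> carrier_vec n" and n: "0 < n" and zero: "\<forall>w\<in>set ws. w $ 0 = 0"
  shows "\<forall>y\<in>span (set ws). y $ 0 = 0"
  using ws zero
proof (induct ws)
  case Nil
  then show ?case
    using span_empty_vec n by simp
next
  case (Cons c ws)
  then have ws: "set ws \<subseteq> carrier_vec n" and c: "c \<in> carrier_vec n"
    by auto
  have "(a \<cdot>\<^sub>v c + x) $ 0 = 0" if x: "x \<in> span (set ws)" for a x
  proof -
    have "x \<in> carrier_vec n"
      using x span_is_subset2[OF ws] by auto
    moreover have "x $ 0 = 0"
      using x Cons by auto
    ultimately show ?thesis
      using c n Cons by simp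
  qed
  then show ?case
    unfolding span_Cons[OF ws c] by auto
qed

lemma card_span_first_entry:
  assumes ws: "set ws \<subseteq> carrier_vec n" and n: "0 < n"
    and y: "y \<in> span (set ws)" and y0: "y $ 0 \<noteq> 0"
  shows "card {c \<in> span (set ws). c $ 0 = v} * card (UNIV :: 'a set) = card (span (set ws))"
proof -
  let ?S = "span (set ws)"
  let ?fibre = "\<lambda>u. {c \<in> ?S. c $ 0 = u}"
  have S: "?S \<subseteq> carrier_vec n"
    using span_is_subset2[OF ws] by simp
  define e where "e = inverse (y $ 0) \<cdot>\<^sub>v y"
  have e: "e \<in> ?S" "e \<in> carrier_vec n" "e $ 0 = 1"
    using smult_in_span[OF ws y] S y y0 n by (auto simp: e_def)
  have shift: "c + a \<cdot>\<^sub>v e \<in> ?fibre (u + a)" if "c \<in> ?fibre u" for c a u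
    using that span_add1[OF ws _ smult_in_span[OF ws e(1)]] S e n by auto
  have fibre: "card (?fibre u) = card (?fibre 0)" for u
  proof (rule bij_betw_same_card[of "\<lambda>c. c + (- u) \<cdot>\<^sub>v e"])
    show "bij_betw (\<lambda>c. c + (- u) \<cdot>\<^sub>v e) (?fibre u) (?fibre 0)"
    proof (rule bij_betwI[where g = "\<lambda>c. c + u \<cdot>\<^sub>v e"])
      show "(\<lambda>c. c + (- u) \<cdot>\<^sub>v e) \<in> ?fibre u \<rightarrow> ?fibre 0"
        using shift[of _ u "- u"] by auto
      show "(\<lambda>c. c + u \<cdot>\<^sub>v e) \<in> ?fibre 0 \<rightarrow> ?fibre u"
        using shift[of _ 0 u] by auto
      show "c + (- u) \<cdot>\<^sub>v e + u \<cdot>\<^sub>v e = c" if "c \<in> ?fibre u" for c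
        using that S e by (intro eq_vecI) auto
      show "c + u \<cdot>\<^sub>v e + (- u) \<cdot>\<^sub>v e = c" if "c \<in> ?fibre 0" for c
        using that S e by (intro eq_vecI) auto
    qed
  qed
  have "card ?S = (\<Sum>u\<in>UNIV. card (?fibre u))"
    using sum.group[OF finite_span[OF ws] finite_UNIV, of "\<lambda>c. c $ 0" "\<lambda>_. 1 :: nat"] by simp
  also have "\<dots> = (\<Sum>u\<in>(UNIV :: 'a set). card (?fibre 0))"
    by (rule sum.cong[OF refl], rule fibre)
  finally show ?thesis
    unfolding fibre[of v] by (simp add: mult.commute)
qed

end

section \<open>Adding a first column or a zero first row\<close>

definition cons_col :: "'a vec \<Rightarrow> 'a mat \<Rightarrow> 'a mat" where
  "cons_col c A = mat (dim_row A) (Suc (dim_col A)) (\<lambda>(i, j). if j = 0 then c $ i else A $$ (i, j - 1))"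

lemma cons_col_carrier: "A \<in> carrier_mat n k \<Longrightarrow> cons_col c A \<in> carrier_mat n (Suc k)"
  by (auto simp: cons_col_def)

lemma cols_cons_col:
  assumes A: "A \<in> carrier_mat n k" and c: "c \<in> carrier_vec n"
  shows "cols (cons_col c A) = c # cols A"
proof (rule nth_equalityI)
  fix j
  assume "j < length (cols (cons_col c A))"
  then show "cols (cons_col c A) ! j = (c # cols A) ! j"
    using A c by (cases j) (auto simp: cons_col_def)
qed (use A in \<open>simp add: cons_col_def\<close>)

lemma bij_betw_cons_col:
  "bij_betw (\<lambda>(A, c). cons_col c A) (carrier_mat n k \<times> carrier_vec n) (carrier_mat n (Suc k))"
proof (rule bij_betwI[where g = "\<lambda>M. (mat n k (\<lambda>(i, j). M $$ (i, Suc j)), col M 0)"])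
  show "(\<lambda>(A, c). cons_col c A) \<in> carrier_mat n k \<times> carrier_vec n \<rightarrow> carrier_mat n (Suc k)"
    by (auto simp: cons_col_carrier)
  show "(\<lambda>M. (mat n k (\<lambda>(i, j). M $$ (i, Suc j)), col M 0))
      \<in> carrier_mat n (Suc k) \<rightarrow> carrier_mat n k \<times> carrier_vec n"
    by auto
  show "(\<lambda>M. (mat n k (\<lambda>(i, j). M $$ (i, Suc j)), col M 0)) ((\<lambda>(A, c). cons_col c A) x) = x"
    if "x \<in> carrier_mat n k \<times> carrier_vec n" for x :: "'a mat \<times> 'a vec"
    using that by (auto simp: cons_col_def)
  show "(\<lambda>(A, c). cons_col c A) ((\<lambda>M. (mat n k (\<lambda>(i, j). M $$ (i, Suc j)), col M 0)) M) = M"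
    if "M \<in> carrier_mat n (Suc k)" for M :: "'a mat"
    using that by (intro eq_matI) (auto simp: cons_col_def)
qed

lemma finite_carrier_mat [simp]: "finite (carrier_mat n k :: 'a::finite mat set)"
proof (induct k)
  case 0
  have "carrier_mat n 0 \<subseteq> {mat n 0 (\<lambda>_. undefined) :: 'a mat}"
    by auto
  then show ?case
    using finite_subset by blast
next
  case (Suc k)
  then have "finite (carrier_mat n k \<times> carrier_vec n :: ('a mat \<times> 'a vec) set)"
    by simp
  then show ?case
    using bij_betw_finite[OF bij_betw_cons_col] by blast
qed

lemma card_carrier_mat_Suc_Collect:
  fixes P :: "'a::finite mat \<Rightarrow> bool"
  shows "card {M \<in> carrier_mat n (Suc k). P M}
    = (\<Sum>A\<in>carrier_mat n k. card {c \<in> carrier_vec n. P (cons_col c A)})"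
proof -
  have eq: "{x \<in> carrier_mat n k \<times> carrier_vec n. case x of (A, c) \<Rightarrow> P (cons_col c A)}
      = (SIGMA A:carrier_mat n k. {c \<in> carrier_vec n. P (cons_col c A)})"
    by auto
  have "bij_betw (\<lambda>(A, c). cons_col c A)
      {x \<in> carrier_mat n k \<times> carrier_vec n. case x of (A, c) \<Rightarrow> P (cons_col c A)}
      {M \<in> carrier_mat n (Suc k). P M}"
    by (rule bij_betw_Collect[OF bij_betw_cons_col]) auto
  then have "card {M \<in> carrier_mat n (Suc k). P M}
      = card (SIGMA A:carrier_mat n k. {c \<in> carrier_vec n. P (cons_col c A)})"
    unfolding eq by (rule bij_betw_same_card[symmetric])
  also have "\<dots> = (\<Sum>A\<in>carrier_mat n k. card {c \<in> carrier_vec n. P (cons_col c A)})"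
    by (intro card_SigmaI ballI finite_subset[OF _ finite_carrier_vec]) auto
  finally show ?thesis .
qed

definition cons_zero_row :: "'a::zero mat \<Rightarrow> 'a mat" where
  "cons_zero_row N = mat (Suc (dim_row N)) (dim_col N) (\<lambda>(i, j). if i = 0 then 0 else N $$ (i - 1, j))"

lemma cols_cons_zero_row:
  "N \<in> carrier_mat n k \<Longrightarrow> cols (cons_zero_row N) = map (vCons 0) (cols N)"
  by (intro nth_equalityI) (auto simp: cons_zero_row_def vec_index_vCons)

lemma bij_betw_cons_zero_row:
  "bij_betw cons_zero_row (carrier_mat n k) {A \<in> carrier_mat (Suc n) k. \<forall>j<k. A $$ (0, j) = 0}"
proof (rule bij_betwI[where g = "\<lambda>A. mat n k (\<lambda>(i, j). A $$ (Suc i, j))"])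
  show "cons_zero_row \<in> carrier_mat n k \<rightarrow> {A \<in> carrier_mat (Suc n) k. \<forall>j<k. A $$ (0, j) = 0}"
    by (auto simp: cons_zero_row_def)
  show "(\<lambda>A. mat n k (\<lambda>(i, j). A $$ (Suc i, j)))
      \<in> {A \<in> carrier_mat (Suc n) k. \<forall>j<k. A $$ (0, j) = 0} \<rightarrow> carrier_mat n k"
    by auto
  show "mat n k (\<lambda>(i, j). cons_zero_row N $$ (Suc i, j)) = N" if "N \<in> carrier_mat n k" for N :: "'a mat"
    using that by (intro eq_matI) (auto simp: cons_zero_row_def)
  show "cons_zero_row (mat n k (\<lambda>(i, j). A $$ (Suc i, j))) = A"
    if "A \<in> {A \<in> carrier_mat (Suc n) k. \<forall>j<k. A $$ (0, j) = 0}" for A :: "'a mat"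
    using that by (intro eq_matI) (auto simp: cons_zero_row_def)
qed

context vec_space
begin

lemma span_map_vCons_zero:
  assumes "set ws \<subseteq> carrier_vec n"
  shows "LinearCombinations.module.span class_ring (module_vec TYPE('a) (Suc n)) (set (map (vCons 0) ws))
    = vCons 0 ` span (set ws)"
  using assms
proof (induct ws)
  case Nil
  have "LinearCombinations.module.span class_ring (module_vec TYPE('a) m) {} = {0\<^sub>v m}" for m
    by (rule vec_space.span_empty_vec)
  then show ?case
    by (simp add: zero_vec_Suc)
next
  case (Cons c ws)
  then have ws: "set ws \<subseteq> carrier_vec n" and c: "c \<in> carrier_vec n"
    by auto
  let ?span = "span (set ws)"
  have lin: "vCons 0 (a \<cdot>\<^sub>v c + y) = a \<cdot>\<^sub>v vCons 0 c + vCons 0 y" if "y \<in> ?span" for a y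
  proof -
    have "y \<in> carrier_vec n"
      using that span_is_subset2[OF ws] by auto
    then show ?thesis
      using c by (intro eq_vecI) (auto simp: vec_index_vCons)
  qed
  have ws': "set (map (vCons 0) ws) \<subseteq> carrier_vec (Suc n)" and c': "vCons 0 c \<in> carrier_vec (Suc n)"
    using ws c by auto
  have "LinearCombinations.module.span class_ring (module_vec TYPE('a) (Suc n)) (set (map (vCons 0) (c # ws)))
      = (\<lambda>(a, y). a \<cdot>\<^sub>v vCons 0 c + y) ` (UNIV \<times> vCons 0 ` ?span)"
    using vec_space.span_Cons[OF ws' c'] Cons(1)[OF ws] by simp
  also have "\<dots> = (\<lambda>(a, y). a \<cdot>\<^sub>v vCons 0 c + vCons 0 y) ` (UNIV \<times> ?span)"
    by force
  also have "\<dots> = (\<lambda>(a, y). vCons 0 (a \<cdot>\<^sub>v c + y)) ` (UNIV \<times> ?span)"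
    using lin by (intro image_cong) auto
  also have "\<dots> = vCons 0 ` ((\<lambda>(a, y). a \<cdot>\<^sub>v c + y) ` (UNIV \<times> ?span))"
    by (simp add: image_image case_prod_unfold)
  also have "\<dots> = vCons 0 ` span (set (c # ws))"
    using span_Cons[OF ws c] by simp
  finally show ?case .
qed

end

context fvec_space
begin

lemma rank_cons_col:
  assumes A: "A \<in> carrier_mat n k" and c: "c \<in> carrier_vec n"
  shows "rank (cons_col c A) = rank A + (if c \<in> span (set (cols A)) then 0 else 1)"
proof -
  have "set (cols A) \<subseteq> carrier_vec n"
    using A cols_dim[of A] by auto
  then show ?thesis
    unfolding rank_def span_dim_def[symmetric] cols_cons_col[OF A c]
    using span_dim_Cons span_dim_Cons_mem c by auto
qed

lemma rank_cons_zero_row: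
  assumes N: "N \<in> carrier_mat n k"
  shows "vec_space.rank (Suc n) (cons_zero_row N) = rank N"
proof -
  have ws: "set (cols N) \<subseteq> carrier_vec n"
    using N cols_dim[of N] by auto
  have "card (LinearCombinations.module.span class_ring (module_vec TYPE('a) (Suc n))
      (set (cols (cons_zero_row N)))) = card (span (set (cols N)))"
    unfolding cols_cons_zero_row[OF N] span_map_vCons_zero[OF ws]
    by (rule card_image) (auto intro: inj_onI)
  moreover have "cons_zero_row N \<in> carrier_mat (Suc n) k"
    using N by (auto simp: cons_zero_row_def)
  ultimately have "card (UNIV :: 'a set) ^ vec_space.rank (Suc n) (cons_zero_row N)
      = card (UNIV :: 'a set) ^ rank N"
    using fvec_space.card_col_space[where n = "Suc n" and A = "cons_zero_row N" and k = k]
      card_col_space[OF N] by simp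
  then show ?thesis
    using card_UNIV_field_ge_2[where 'a = 'a] by simp
qed

lemma card_cons_col_rank_Collect:
  assumes A: "A \<in> carrier_mat n k"
  shows "card {c \<in> carrier_vec n. rank (cons_col c A) = t \<and> P c}
    = (if rank A = t then card {c \<in> span (set (cols A)). P c} else 0)
    + (if rank A + 1 = t then card {c \<in> carrier_vec n - span (set (cols A)). P c} else 0)"
proof -
  let ?S = "span (set (cols A))"
  have S: "?S \<subseteq> carrier_vec n"
    using span_is_subset2[of "set (cols A)"] A cols_dim[of A] by auto
  have rk: "rank (cons_col c A) = rank A + (if c \<in> ?S then 0 else 1)" if "c \<in> carrier_vec n" for c
    using rank_cons_col[OF A that] .
  show ?thesis
  proof (cases "rank A = t")
    case True
    then have "{c \<in> carrier_vec n. rank (cons_col c A) = t \<and> P c} = {c \<in> ?S. P c}"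
      using rk S by (auto split: if_splits)
    then show ?thesis
      using True by simp
  next
    case False
    then have "{c \<in> carrier_vec n. rank (cons_col c A) = t \<and> P c}
        = (if rank A + 1 = t then {c \<in> carrier_vec n - ?S. P c} else {})"
      using rk by (auto split: if_splits)
    then show ?thesis
      using False by simp
  qed
qed

lemma card_cons_col_rank:
  assumes A: "A \<in> carrier_mat n k"
  defines "Q \<equiv> real (card (UNIV :: 'a set))"
  shows "real (card {c \<in> carrier_vec n. rank (cons_col c A) = t})
    = (if rank A = t then Q ^ t else 0) + (if rank A + 1 = t then Q ^ n - Q ^ (t - 1) else 0)"
proof -
  let ?S = "span (set (cols A))"
  have S: "?S \<subseteq> carrier_vec n"
    using span_is_subset2[of "set (cols A)"] A cols_dim[of A] by auto
  have "real (card (carrier_vec n - ?S)) = Q ^ n - Q ^ rank A"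
    using card_Diff_Collect[OF finite_carrier_vec S, where P = "\<lambda>_. True"] card_carrier_vec card_col_space[OF A]
    unfolding Q_def by (simp add: set_diff_eq)
  then show ?thesis
    using card_cons_col_rank_Collect[OF A, of t "\<lambda>_. True"] card_col_space[OF A]
    unfolding Q_def by (auto simp: set_diff_eq)
qed

lemma card_cons_col_rank_first_entry:
  fixes u :: 'a
  assumes A: "A \<in> carrier_mat n k" and n: "0 < n"
  defines "Q \<equiv> real (card (UNIV :: 'a set))"
    and "E \<equiv> real (card {c \<in> span (set (cols A)). c $ 0 = u})"
  shows "real (card {c \<in> carrier_vec n. rank (cons_col c A) = t \<and> c $ 0 \<noteq> u})
    = (if rank A = t then Q ^ t - E else 0)
    + (if rank A + 1 = t then Q ^ n - Q ^ (n - 1) - Q ^ rank A + E else 0)"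
proof -
  let ?S = "span (set (cols A))"
  have S: "?S \<subseteq> carrier_vec n"
    using span_is_subset2[of "set (cols A)"] A cols_dim[of A] by auto
  have fS: "finite ?S"
    using finite_subset[OF S finite_carrier_vec] .
  have in_S: "real (card {c \<in> ?S. c $ 0 \<noteq> u}) = Q ^ rank A - E"
    using card_Collect_not[OF fS, of "\<lambda>c. c $ 0 = u"] card_col_space[OF A]
    unfolding Q_def E_def by simp
  have "card {c \<in> carrier_vec n. c $ 0 = u} = card (UNIV :: 'a set) ^ (n - 1)"
    using card_carrier_vec_first_entry[of "n - 1" u] n by simp
  then have all: "real (card {c \<in> carrier_vec n. c $ 0 \<noteq> u}) = Q ^ n - Q ^ (n - 1)"
    using card_Collect_not[OF finite_carrier_vec, where P = "\<lambda>c. c $ 0 = u"] card_carrier_vec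
    unfolding Q_def by simp
  have out_S: "real (card {c \<in> carrier_vec n - ?S. c $ 0 \<noteq> u}) = Q ^ n - Q ^ (n - 1) - (Q ^ rank A - E)"
    using card_Diff_Collect[OF finite_carrier_vec S, where P = "\<lambda>c. c $ 0 \<noteq> u"] all in_S by simp
  show ?thesis
    using card_cons_col_rank_Collect[OF A, of t "\<lambda>c. c $ 0 \<noteq> u"] in_S out_S by simp
qed

lemma card_col_space_first_entry_nonzero_row:
  assumes A: "A \<in> carrier_mat n k" and n: "0 < n" and j: "j < k" and nz: "A $$ (0, j) \<noteq> 0"
  shows "real (card {c \<in> span (set (cols A)). c $ 0 = u})
    = real (card (UNIV :: 'a set)) ^ rank A / real (card (UNIV :: 'a set))"
proof -
  have ws: "set (cols A) \<subseteq> carrier_vec n"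
    using A cols_dim[of A] by auto
  have "col A j \<in> span (set (cols A))"
    using in_own_span[OF ws] A j by (auto simp: cols_def)
  moreover have "col A j $ 0 \<noteq> 0"
    using A j nz n by simp
  ultimately have "card {c \<in> span (set (cols A)). c $ 0 = u} * card (UNIV :: 'a set)
      = card (UNIV :: 'a set) ^ rank A"
    using card_span_first_entry[OF ws n] card_col_space[OF A] by simp
  then have "real (card {c \<in> span (set (cols A)). c $ 0 = u} * card (UNIV :: 'a set))
      = real (card (UNIV :: 'a set) ^ rank A)"
    by (simp only:)
  then show ?thesis
    using card_UNIV_field_ge_2[where 'a = 'a] by (simp add: field_simps)
qed

lemma col_space_first_entry_zero_row:
  assumes A: "A \<in> carrier_mat n k" and n: "0 < n" and zero: "\<forall>j<k. A $$ (0, j) = 0"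
  shows "{c \<in> span (set (cols A)). c $ 0 = u} = (if u = 0 then span (set (cols A)) else {})"
proof -
  have ws: "set (cols A) \<subseteq> carrier_vec n"
    using A cols_dim[of A] by auto
  have "\<forall>w\<in>set (cols A). w $ 0 = 0"
    using A zero n by (auto simp: cols_def)
  then show ?thesis
    using span_first_entry_zero[OF ws n] by auto
qed

end

definition subdiag_sum :: "nat \<Rightarrow> 'a::field mat \<Rightarrow> 'a" where
  "subdiag_sum r A = (\<Sum>i<r - 1. A $$ (Suc i, i))"

lemma tau_cons_col:
  assumes A: "A \<in> carrier_mat l k" and r: "1 \<le> r" "r \<le> l" "r \<le> Suc k"
  shows "tau r (cons_col c A) = c $ 0 + subdiag_sum r A"
proof -
  obtain r' where r': "r = Suc r'"
    using r by (cases r) auto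
  have "tau r (cons_col c A) = cons_col c A $$ (0, 0) + (\<Sum>i<r'. cons_col c A $$ (Suc i, Suc i))"
    unfolding tau_def r' by (simp only: sum.lessThan_Suc_shift)
  also have "\<dots> = c $ 0 + (\<Sum>i<r'. A $$ (Suc i, i))"
    using A r r' by (auto intro!: sum.cong simp: cons_col_def)
  finally show ?thesis
    unfolding subdiag_sum_def r' by simp
qed

lemma subdiag_sum_cons_zero_row:
  assumes N: "N \<in> carrier_mat n k" and r: "1 \<le> r" "r \<le> Suc n" "r \<le> Suc k"
  shows "subdiag_sum r (cons_zero_row N) = tau (r - 1) N"
  unfolding subdiag_sum_def tau_def
  by (rule sum.cong) (use N r in \<open>auto simp: cons_zero_row_def\<close>)

context fvec_space
begin

lemma card_cons_col_rank_tau: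
  assumes A: "A \<in> carrier_mat n k" and r: "1 \<le> r" "r \<le> n" "r \<le> Suc k"
  defines "Q \<equiv> real (card (UNIV :: 'a set))" and "Z \<equiv> \<forall>j<k. A $$ (0, j) = 0"
  shows "real (card {c \<in> carrier_vec n. rank (cons_col c A) = Suc u \<and> tau r (cons_col c A) \<noteq> 0})
    = (if \<not> Z \<and> rank A = Suc u then Q ^ Suc u - Q ^ u else 0)
    + (if Z \<and> rank A = Suc u \<and> subdiag_sum r A \<noteq> 0 then Q ^ Suc u else 0)
    + (if \<not> Z \<and> rank A = u then Q ^ n - Q ^ u - Q ^ (n - 1) + Q ^ u / Q else 0)
    + (if Z \<and> rank A = u then Q ^ n - Q ^ (n - 1) else 0)
    - (if Z \<and> rank A = u \<and> subdiag_sum r A \<noteq> 0 then Q ^ u else 0)"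
proof -
  let ?\<sigma> = "subdiag_sum r A"
  let ?E = "real (card {c \<in> span (set (cols A)). c $ 0 = - ?\<sigma>})"
  have n: "0 < n"
    using r by simp
  have "{c \<in> carrier_vec n. rank (cons_col c A) = Suc u \<and> tau r (cons_col c A) \<noteq> 0}
      = {c \<in> carrier_vec n. rank (cons_col c A) = Suc u \<and> c $ 0 \<noteq> - ?\<sigma>}"
    using tau_cons_col[OF A r] by (auto simp: eq_neg_iff_add_eq_0)
  moreover have "?E = (if Z then (if ?\<sigma> = 0 then Q ^ rank A else 0) else Q ^ rank A / Q)"
  proof (cases Z)
    case True
    then show ?thesis
      using col_space_first_entry_zero_row[OF A n, of "- ?\<sigma>"] card_col_space[OF A]
      unfolding Z_def Q_def by simp
  next
    case False
    then obtain j where "j < k" "A $$ (0, j) \<noteq> 0"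
      unfolding Z_def by auto
    then show ?thesis
      using card_col_space_first_entry_nonzero_row[OF A n] False unfolding Q_def by simp
  qed
  moreover have "Q > 0"
    unfolding Q_def using card_UNIV_field_ge_2[where 'a = 'a] by simp
  ultimately show ?thesis
    using card_cons_col_rank_first_entry[OF A n, of "Suc u" "- ?\<sigma>"] unfolding Q_def[symmetric]
    by (auto simp: field_simps)
qed

end

lemma card_zero_first_row_rank_Collect:
  fixes R :: "'a::{field,finite} mat \<Rightarrow> bool"
  shows "card {A \<in> carrier_mat (Suc n) k. (\<forall>j<k. A $$ (0, j) = 0) \<and> vec_space.rank (Suc n) A = s \<and> R A}
    = card {N \<in> carrier_mat n k. vec_space.rank n N = s \<and> R (cons_zero_row N)}"
proof -
  have "bij_betw cons_zero_row {N \<in> carrier_mat n k. vec_space.rank n N = s \<and> R (cons_zero_row N)}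
      {A \<in> {A \<in> carrier_mat (Suc n) k. \<forall>j<k. A $$ (0, j) = 0}. vec_space.rank (Suc n) A = s \<and> R A}"
    by (rule bij_betw_Collect[OF bij_betw_cons_zero_row]) (simp add: fvec_space.rank_cons_zero_row)
  then show ?thesis
    by (simp add: bij_betw_same_card)
qed

lemma card_zero_first_row_rank:
  fixes ty :: "'a::{field,finite} itself"
  shows "card {A \<in> carrier_mat (Suc n) k :: 'a mat set. (\<forall>j<k. A $$ (0, j) = 0) \<and> vec_space.rank (Suc n) A = s}
    = mu ty s n k"
  using card_zero_first_row_rank_Collect[where 'a = 'a, of n k s "\<lambda>_. True"] unfolding mu_def by simp

lemma card_zero_first_row_rank_subdiag_sum:
  fixes ty :: "'a::{field,finite} itself"
  assumes r: "1 \<le> r" "r \<le> Suc n" "r \<le> Suc k"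
  shows "card {A \<in> carrier_mat (Suc n) k :: 'a mat set. (\<forall>j<k. A $$ (0, j) = 0)
      \<and> vec_space.rank (Suc n) A = s \<and> subdiag_sum r A \<noteq> 0}
    = frak_w ty (r - 1) s n k"
proof -
  have "{N \<in> carrier_mat n k :: 'a mat set. vec_space.rank n N = s \<and> subdiag_sum r (cons_zero_row N) \<noteq> 0}
      = {N :: 'a mat. N \<in> carrier_mat n k \<and> vec_space.rank n N = s \<and> tau (r - 1) N \<noteq> 0}"
    using subdiag_sum_cons_zero_row[where 'a = 'a, OF _ r] by auto
  then show ?thesis
    using card_zero_first_row_rank_Collect[of n k s "\<lambda>A :: 'a mat. subdiag_sum r A \<noteq> 0"]
    unfolding frak_w_def by simp
qed

lemma card_nonzero_first_row_rank:
  fixes ty :: "'a::{field,finite} itself"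
  shows "real (card {A \<in> carrier_mat (Suc n) k :: 'a mat set. \<not> (\<forall>j<k. A $$ (0, j) = 0)
      \<and> vec_space.rank (Suc n) A = s})
    = real (mu ty s (Suc n) k) - real (mu ty s n k)"
proof -
  let ?C = "carrier_mat (Suc n) k :: 'a mat set"
  let ?Z = "\<lambda>A :: 'a mat. \<forall>j<k. A $$ (0, j) = 0"
  have "mu ty s (Suc n) k = card ({A \<in> ?C. ?Z A \<and> vec_space.rank (Suc n) A = s}
      \<union> {A \<in> ?C. \<not> ?Z A \<and> vec_space.rank (Suc n) A = s})"
    unfolding mu_def by (rule arg_cong[where f = card]) auto
  also have "\<dots> = mu ty s n k + card {A \<in> ?C. \<not> ?Z A \<and> vec_space.rank (Suc n) A = s}"
    unfolding card_zero_first_row_rank[where ty = ty, symmetric]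
    by (rule card_Un_disjoint) (auto intro: finite_subset[OF _ finite_carrier_mat])
  finally show ?thesis
    by simp
qed

section \<open>Rank counts\<close>

lemma mu_Suc_cols_if:
  fixes ty :: "'a::{field,finite} itself"
  defines "Q \<equiv> real (card (UNIV :: 'a set))"
  shows "real (mu ty s a (Suc b)) = Q ^ s * real (mu ty s a b)
    + (if s = 0 then 0 else (Q ^ a - Q ^ (s - 1)) * real (mu ty (s - 1) a b))"
proof -
  let ?C = "carrier_mat a b :: 'a mat set"
  have "real (mu ty s a (Suc b))
      = (\<Sum>A\<in>?C. real (card {c \<in> carrier_vec a. vec_space.rank a (cons_col c A) = s}))"
    unfolding mu_def card_carrier_mat_Suc_Collect by simp
  also have "\<dots> = (\<Sum>A\<in>?C. (if vec_space.rank a A = s then Q ^ s else 0)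
      + (if vec_space.rank a A + 1 = s then Q ^ a - Q ^ (s - 1) else 0))"
    unfolding Q_def by (intro sum.cong refl fvec_space.card_cons_col_rank)
  also have "\<dots> = real (card {A \<in> ?C. vec_space.rank a A = s}) * Q ^ s
      + real (card {A \<in> ?C. vec_space.rank a A + 1 = s}) * (Q ^ a - Q ^ (s - 1))"
    by (simp only: sum.distrib sum_if_const[OF finite_carrier_mat])
  also have "\<dots> = Q ^ s * real (mu ty s a b)
      + (if s = 0 then 0 else (Q ^ a - Q ^ (s - 1)) * real (mu ty (s - 1) a b))"
    by (cases s) (simp_all add: mu_def mult.commute)
  finally show ?thesis .
qed

lemma mu_zero_cols: "mu (ty :: 'a::{field,finite} itself) s a 0 = (if s = 0 then 1 else 0)"
proof -
  have C: "carrier_mat a 0 = {mat a 0 (\<lambda>_. undefined) :: 'a mat}"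
    by auto
  have "vec_space.rank a (mat a 0 (\<lambda>_. undefined) :: 'a mat) = 0"
    using vec_space.rank_le_nc[of "mat a 0 (\<lambda>_. undefined) :: 'a mat" a 0] by simp
  then have "{M \<in> carrier_mat a 0 :: 'a mat set. vec_space.rank a M = s}
      = (if s = 0 then {mat a 0 (\<lambda>_. undefined)} else {})"
    unfolding C by auto
  then show ?thesis
    unfolding mu_def by simp
qed

definition rank_count :: "real \<Rightarrow> nat \<Rightarrow> nat \<Rightarrow> nat \<Rightarrow> real" where
  "rank_count Q a b s = (\<Prod>i<s. (Q ^ a - Q ^ i) * (Q ^ b - Q ^ i)) / (\<Prod>i<s. Q ^ s - Q ^ i)"

lemma rank_count_0: "rank_count Q a b 0 = 1"
  by (simp add: rank_count_def)

lemma rank_count_zero_cols: "rank_count Q a 0 (Suc s) = 0"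
  by (auto simp: rank_count_def intro!: bexI[of _ 0])

lemma rank_count_commute: "rank_count Q a b s = rank_count Q b a s"
  by (simp add: rank_count_def mult.commute)

lemma prod_power_Suc_diff:
  fixes Q :: real
  shows "(\<Prod>i<Suc s. Q ^ Suc b - Q ^ i) = (Q ^ Suc b - 1) * Q ^ s * (\<Prod>i<s. Q ^ b - Q ^ i)"
proof -
  have "(\<Prod>i<Suc s. Q ^ Suc b - Q ^ i) = (Q ^ Suc b - 1) * (\<Prod>i<s. Q ^ Suc b - Q ^ Suc i)"
    by (simp only: prod.lessThan_Suc_shift power_0)
  also have "(\<Prod>i<s. Q ^ Suc b - Q ^ Suc i) = (\<Prod>i<s. Q * (Q ^ b - Q ^ i))"
    by (rule prod.cong) (auto simp: algebra_simps)
  finally show ?thesis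
    by (simp add: prod.distrib)
qed

lemma rank_count_Suc_Suc:
  fixes Q :: real
  assumes Q: "Q > 1"
  shows "rank_count Q a (Suc b) (Suc s) = Q ^ Suc s * rank_count Q a b (Suc s) + (Q ^ a - Q ^ s) * rank_count Q a b s"
proof -
  define X where "X = (\<Prod>i<s. Q ^ a - Q ^ i)"
  define Y where "Y = (\<Prod>i<s. Q ^ b - Q ^ i)"
  define D where "D = (\<Prod>i<s. Q ^ s - Q ^ i)"
  define p where "p = Q ^ s"
  have "Q ^ s - Q ^ i \<noteq> 0" if "i < s" for i
    using power_strict_increasing[OF that Q] by simp
  then have "D \<noteq> 0"
    unfolding D_def by simp
  moreover have "p \<noteq> 0" "Q * p - 1 \<noteq> 0"
    unfolding p_def using Q one_less_power[OF Q, of "Suc s"] by auto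
  ultimately have alg: "X * (Qa - p) * ((Q * Qb - 1) * p * Y) / ((Q * p - 1) * p * D)
      = Q * p * (X * (Qa - p) * (Y * (Qb - p)) / ((Q * p - 1) * p * D)) + (Qa - p) * (X * Y / D)"
    for Qa Qb
    by (simp add: field_simps)
  have "rank_count Q a (Suc b) (Suc s) = X * (Q ^ a - p) * ((Q * Q ^ b - 1) * p * Y) / ((Q * p - 1) * p * D)"
    unfolding rank_count_def prod.distrib prod_power_Suc_diff X_def Y_def D_def p_def by simp
  moreover have "rank_count Q a b (Suc s) = X * (Q ^ a - p) * (Y * (Q ^ b - p)) / ((Q * p - 1) * p * D)"
    unfolding rank_count_def prod.distrib prod_power_Suc_diff X_def Y_def D_def p_def by simp
  moreover have "rank_count Q a b s = X * Y / D"
    unfolding rank_count_def X_def Y_def D_def prod.distrib by simp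
  ultimately show ?thesis
    unfolding power_Suc p_def[symmetric] using alg by simp
qed

lemma mu_eq_rank_count:
  fixes ty :: "'a::{field,finite} itself"
  shows "real (mu ty s a b) = rank_count (real (card (UNIV :: 'a set))) a b s"
proof (induct b arbitrary: s)
  case 0
  then show ?case
    by (cases s) (simp_all add: mu_zero_cols rank_count_0 rank_count_zero_cols)
next
  case (Suc b)
  have Q: "real (card (UNIV :: 'a set)) > 1"
    using card_UNIV_field_ge_2[where 'a = 'a] by simp
  show ?case
  proof (cases s)
    case 0
    then show ?thesis
      using mu_Suc_cols_if[of ty 0 a b] Suc[of 0] by (simp add: rank_count_0)
  next
    case (Suc s')
    then show ?thesis
      using mu_Suc_cols_if[of ty s a b] Suc.hyps[of s] Suc.hyps[of s'] rank_count_Suc_Suc[OF Q, of a b s']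
      by simp
  qed
qed

lemma mu_zero_rank: "mu (ty :: 'a::{field,finite} itself) 0 a b = 1"
  using mu_eq_rank_count[of ty 0 a b] by (simp add: rank_count_0)

lemma mu_Suc_rows:
  fixes ty :: "'a::{field,finite} itself"
  defines "Q \<equiv> real (card (UNIV :: 'a set))"
  shows "real (mu ty (Suc s) (Suc a) b) = Q ^ Suc s * real (mu ty (Suc s) a b) + (Q ^ b - Q ^ s) * real (mu ty s a b)"
proof -
  have "Q > 1"
    unfolding Q_def using card_UNIV_field_ge_2[where 'a = 'a] by simp
  then show ?thesis
    unfolding mu_eq_rank_count Q_def[symmetric] using rank_count_Suc_Suc[of Q b a s] by (simp add: rank_count_commute)
qed

lemma mu_Suc_cols:
  fixes ty :: "'a::{field,finite} itself"
  defines "Q \<equiv> real (card (UNIV :: 'a set))"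
  shows "real (mu ty (Suc s) a (Suc b)) = Q ^ Suc s * real (mu ty (Suc s) a b) + (Q ^ a - Q ^ s) * real (mu ty s a b)"
  using mu_Suc_cols_if[of ty "Suc s" a b] unfolding Q_def by simp

lemma mu_exchange:
  fixes ty :: "'a::{field,finite} itself"
  defines "Q \<equiv> real (card (UNIV :: 'a set))"
  shows "Q ^ n * real (mu ty u (Suc n) k) - Q ^ k * real (mu ty u n (Suc k))
    = Q ^ u / Q * (real (mu ty u (Suc n) k) - real (mu ty u n (Suc k)))
    - Q ^ u * (real (mu ty (Suc u) (Suc n) k) - real (mu ty (Suc u) n (Suc k)))"
proof -
  note rows = mu_Suc_rows[of ty _ n k, folded Q_def] and cols = mu_Suc_cols[of ty _ n k, folded Q_def]
  have "Q > 0"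
    unfolding Q_def using card_UNIV_field_ge_2[where 'a = 'a] by simp
  show ?thesis
  proof (cases u)
    case 0
    then show ?thesis
      using \<open>Q > 0\<close> unfolding rows cols by (simp add: mu_zero_rank algebra_simps)
  next
    case (Suc v)
    have "Q ^ Suc v / Q = Q ^ v"
      using \<open>Q > 0\<close> by simp
    then show ?thesis
      unfolding Suc rows cols by (simp add: algebra_simps)
  qed
qed

lemma frak_w_Suc_Suc:
  fixes ty :: "'a::{field,finite} itself"
  assumes r: "1 \<le> r" "r \<le> Suc n" "r \<le> Suc k"
  defines "Q \<equiv> real (card (UNIV :: 'a set))"
  shows "real (frak_w ty r (Suc u) (Suc n) (Suc k))
    = (real (mu ty (Suc u) (Suc n) k) - real (mu ty (Suc u) n k)) * (Q ^ Suc u - Q ^ u)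
    + real (frak_w ty (r - 1) (Suc u) n k) * Q ^ Suc u
    + (real (mu ty u (Suc n) k) - real (mu ty u n k)) * (Q ^ Suc n - Q ^ u - Q ^ n + Q ^ u / Q)
    + real (mu ty u n k) * (Q ^ Suc n - Q ^ n)
    - real (frak_w ty (r - 1) u n k) * Q ^ u" (is "_ = ?rhs")
proof -
  let ?C = "carrier_mat (Suc n) k :: 'a mat set"
  let ?Z = "\<lambda>A :: 'a mat. \<forall>j<k. A $$ (0, j) = 0"
  let ?rk = "vec_space.rank (Suc n) :: 'a mat \<Rightarrow> nat"
  have "real (frak_w ty r (Suc u) (Suc n) (Suc k)) = (\<Sum>A\<in>?C.
      real (card {c \<in> carrier_vec (Suc n). ?rk (cons_col c A) = Suc u \<and> tau r (cons_col c A) \<noteq> 0}))"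
    unfolding frak_w_def card_carrier_mat_Suc_Collect by simp
  also have "\<dots> = (\<Sum>A\<in>?C.
        (if \<not> ?Z A \<and> ?rk A = Suc u then Q ^ Suc u - Q ^ u else 0)
      + (if ?Z A \<and> ?rk A = Suc u \<and> subdiag_sum r A \<noteq> 0 then Q ^ Suc u else 0)
      + (if \<not> ?Z A \<and> ?rk A = u then Q ^ Suc n - Q ^ u - Q ^ n + Q ^ u / Q else 0)
      + (if ?Z A \<and> ?rk A = u then Q ^ Suc n - Q ^ n else 0)
      - (if ?Z A \<and> ?rk A = u \<and> subdiag_sum r A \<noteq> 0 then Q ^ u else 0))"
    by (rule sum.cong[OF refl],
        rule fvec_space.card_cons_col_rank_tau[where 'a = 'a and n = "Suc n", OF _ r, unfolded diff_Suc_1,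
          folded Q_def])
  also have "\<dots> = real (card {A \<in> ?C. \<not> ?Z A \<and> ?rk A = Suc u}) * (Q ^ Suc u - Q ^ u)
      + real (card {A \<in> ?C. ?Z A \<and> ?rk A = Suc u \<and> subdiag_sum r A \<noteq> 0}) * Q ^ Suc u
      + real (card {A \<in> ?C. \<not> ?Z A \<and> ?rk A = u}) * (Q ^ Suc n - Q ^ u - Q ^ n + Q ^ u / Q)
      + real (card {A \<in> ?C. ?Z A \<and> ?rk A = u}) * (Q ^ Suc n - Q ^ n)
      - real (card {A \<in> ?C. ?Z A \<and> ?rk A = u \<and> subdiag_sum r A \<noteq> 0}) * Q ^ u"
    by (simp only: sum.distrib sum_subtractf sum_if_const[OF finite_carrier_mat])
  also have "\<dots> = ?rhs"
    unfolding card_nonzero_first_row_rank[where ty = ty] card_zero_first_row_rank[where ty = ty]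
      card_zero_first_row_rank_subdiag_sum[where ty = ty, OF r] by (rule refl)
  finally show ?thesis .
qed

text \<open>Here \<open>p = q\<^sup>u\<close>, \<open>qn = q\<^sup>n\<close>, \<open>qk = q\<^sup>k\<close>, and \<open>M, N, Z, W\<close> at \<open>t = u + 1\<close> and at \<open>u\<close> stand for
  \<open>\<mu>(n+1, k)\<close>, \<open>\<mu>(n, k+1)\<close>, \<open>\<mu>(n, k)\<close> and \<open>\<frak>w\<^sub>r\<^sub>-\<^sub>1(n, k)\<close>.\<close>

lemma recurrence_identity:
  fixes Q p qn qk Mt Mu Nt Nu Zt Zu Wt Wu :: real
  assumes Q: "Q > 1"
    and exchange: "qn * Mu - qk * Nu = p / Q * (Mu - Nu) - p * (Mt - Nt)"
  shows "((Mt - Zt) * (Q * p - p) + Wt * (Q * p) + (Mu - Zu) * (Q * qn - p - qn + p / Q)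
      + Zu * (Q * qn - qn) - Wu * p) / (Q - 1)
    = (Q * p * (Wt / (Q - 1)) + p * (Nt - Zt)) - (p * (Wu / (Q - 1)) + p / Q * (Nu - Zu)) + qk * Nu"
proof -
  define d where "d = p / Q"
  define wt where "wt = Wt / (Q - 1)"
  define wu where "wu = Wu / (Q - 1)"
  have p: "p = Q * d" and W: "Wt = (Q - 1) * wt" "Wu = (Q - 1) * wu"
    using Q by (simp_all add: d_def wt_def wu_def)
  let ?R = "Q * (Q * d) * wt + Q * d * (Nt - Zt) - (Q * d * wu + d * (Nu - Zu)) + qk * Nu"
  have "(Mt - Zt) * (Q * (Q * d) - Q * d) + (Q - 1) * wt * (Q * (Q * d))
      + (Mu - Zu) * (Q * qn - Q * d - qn + d) + Zu * (Q * qn - qn) - (Q - 1) * wu * (Q * d)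
    = (Q - 1) * ?R + (Q - 1) * ((qn * Mu - qk * Nu) - (d * (Mu - Nu) - Q * d * (Mt - Nt)))"
    by (simp add: algebra_simps)
  moreover have "(qn * Mu - qk * Nu) - (d * (Mu - Nu) - Q * d * (Mt - Nt)) = 0"
    using exchange unfolding d_def[symmetric] unfolding p by simp
  ultimately show ?thesis
    unfolding d_def[symmetric] wt_def[symmetric] wu_def[symmetric] unfolding p W
    using Q by simp
qed

theorem mainTheorem3:
  fixes ty :: "'a::{field,finite} itself" and r t l m :: nat
  assumes "1 \<le> r" and "r \<le> l" and "l \<le> m" and "1 \<le> t" and "t < l"
  shows "hat_w ty r t l m =
           A_term ty l m r t - A_term ty l m r (t - 1)
           + real (card (UNIV :: 'a set)) ^ (m - 1) * real (mu ty (t - 1) (l - 1) m)"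
proof -
  obtain n where l: "l = Suc n"
    using assms by (cases l) auto
  obtain k where m: "m = Suc k"
    using assms by (cases m) auto
  obtain u where t: "t = Suc u"
    using assms by (cases t) auto
  have r: "1 \<le> r" "r \<le> Suc n" "r \<le> Suc k"
    using assms l m by auto
  define Q where "Q = real (card (UNIV :: 'a set))"
  have "Q > 1"
    unfolding Q_def using card_UNIV_field_ge_2[where 'a = 'a] by simp
  have powi: "Q powi (int s - 1) = Q ^ s / Q" for s
    using \<open>Q > 1\<close> by (simp add: power_int_diff)
  show ?thesis
    unfolding hat_w_def[of ty r] l m t Q_def[symmetric]
      frak_w_Suc_Suc[where ty = ty, OF r, folded Q_def, unfolded power_Suc]
      recurrence_identity[OF \<open>Q > 1\<close> mu_exchange[of n ty u k, folded Q_def]]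
    using \<open>Q > 1\<close> by (simp add: A_term_def hat_w_def powi Q_def[symmetric])
qed

end
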